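(* The set $\{x\in V: 0\in\overline{A\cdot x}\}$ is a real algebraic subset of $V$; in particular it is closed.
   Context: Let $V$ be a finite-dimensional real vector space with a scalar product. Let $G\subset\mathrm{GL}(V)$ be a connected closed subgroup, closed under transpose, with Lie algebra $\mathfrak g$, $G=K\exp(\mathfrak p)$ with $K=G\cap\mathrm O(V)$, $\mathfrak p=\mathfrak g\cap\mathrm{Sym}(V)$. Let $\mathfrak a\subset\mathfrak p$ be an Abelian subalgebra and $A=\exp(\mathfrak a)$, acting linearly on $V$. *)

theory Defs
  imports "HOL-Analysis.Analysis"
begin

primrec matpow :: "real^'n^'n \<Rightarrow> nat \<Rightarrow> real^'n^'n" where
  "matpow X 0 = mat 1"
| "matpow X (Suc k) = X ** matpow X k"

definition mexp :: "real^'n^'n \<Rightarrow> real^'n^'n" where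
  "mexp X = (\<Sum>k. (1 / fact k) *\<^sub>R matpow X k)"

inductive_set poly_fun :: "(real^'n \<Rightarrow> real) set" where
  const: "(\<lambda>x. c) \<in> poly_fun"
| coord: "(\<lambda>x. x $ i) \<in> poly_fun"
| add: "p \<in> poly_fun \<Longrightarrow> q \<in> poly_fun \<Longrightarrow> (\<lambda>x. p x + q x) \<in> poly_fun"
| mult: "p \<in> poly_fun \<Longrightarrow> q \<in> poly_fun \<Longrightarrow> (\<lambda>x. p x * q x) \<in> poly_fun"

definition real_algebraic_set :: "(real^'n) set \<Rightarrow> bool" where
  "real_algebraic_set S \<longleftrightarrow>
     (\<exists>P. finite P \<and> P \<subseteq> poly_fun \<and> S = {x. \<forall>p\<in>P. p x = 0})"

end

theory Submission
  imports Defs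
begin

text \<open>
  Commuting symmetric matrices have a common orthonormal eigenbasis \<open>B\<close> (obtained by splitting
  off an eigenspace of a non-scalar member, found by maximising its Rayleigh quotient, together
  with its orthogonal complement). In this basis every \<open>exp X\<close>, \<open>X \<in> \<aa>\<close>, acts diagonally, so
  \<open>\<bar>\<langle>u, exp X x\<rangle>\<bar> \<le> \<parallel>exp X x\<parallel>\<close> bounds each coordinate. Consequently, if \<open>0\<close> lies in the
  closure of the orbit of \<open>y\<close> and \<open>x\<close> vanishes wherever \<open>y\<close> does, then
  \<open>\<parallel>exp X x\<parallel> \<le> K \<parallel>exp X y\<parallel>\<close> with \<open>K\<close> independent of \<open>X\<close>, and \<open>0\<close> lies in the closure of the
  orbit of \<open>x\<close> as well. Hence the set in question is the union of the finitely many coordinate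
  subspaces \<open>{x. \<forall>u\<in>S. \<langle>u, x\<rangle> = 0}\<close>, \<open>S \<subseteq> B\<close>, that it contains, which is real algebraic.
\<close>

section \<open>Orthonormal bases\<close>

definition orthonormal :: "'a::real_inner set \<Rightarrow> bool" where
  "orthonormal B \<longleftrightarrow> pairwise orthogonal B \<and> (\<forall>u\<in>B. norm u = 1)"

lemma orthonormal_finite:
  fixes B :: "'a::euclidean_space set"
  assumes "orthonormal B"
  shows "finite B"
proof -
  have "0 \<notin> B" using assms unfolding orthonormal_def by force
  then show ?thesis
    using assms pairwise_orthogonal_independent finiteI_independent
    unfolding orthonormal_def by blast
qed

lemma orthonormal_inner_sum:
  fixes B :: "'a::euclidean_space set"
  assumes "orthonormal B" and "v \<in> B"
  shows "inner v (\<Sum>u\<in>B. c u *\<^sub>R u) = c v"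
proof -
  have "inner v (\<Sum>u\<in>B. c u *\<^sub>R u) = (\<Sum>u\<in>B. if u = v then c v else 0)"
    unfolding inner_sum_right
  proof (rule sum.cong)
    fix u assume "u \<in> B"
    then show "inner v (c u *\<^sub>R u) = (if u = v then c v else 0)"
      using assms unfolding orthonormal_def pairwise_def orthogonal_def
      by (auto simp: norm_eq_sqrt_inner inner_commute)
  qed simp
  also have "\<dots> = c v" using orthonormal_finite[OF assms(1)] assms(2) by simp
  finally show ?thesis .
qed

lemma orthonormal_basis_expansion:
  fixes B :: "'a::euclidean_space set"
  assumes "orthonormal B" and "span B = UNIV"
  shows "x = (\<Sum>u\<in>B. inner u x *\<^sub>R u)"
proof -
  define d where "d = x - (\<Sum>u\<in>B. inner u x *\<^sub>R u)"
  have "orthogonal d v" if "v \<in> B" for v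
    using orthonormal_inner_sum[OF assms(1) that, of "\<lambda>u. inner u x"]
    unfolding d_def orthogonal_def by (simp add: inner_diff_right inner_commute)
  then have "orthogonal d d" using orthogonal_to_span assms(2) by blast
  then show ?thesis unfolding d_def orthogonal_self by simp
qed

lemma span_Un_orthogonal_complement:
  fixes U W :: "'a::euclidean_space set"
  assumes "subspace U" "subspace W" "U \<subseteq> W"
  shows "span (U \<union> {w\<in>W. \<forall>u\<in>U. orthogonal u w}) = W"
proof
  show "span (U \<union> {w\<in>W. \<forall>u\<in>U. orthogonal u w}) \<subseteq> W"
    using assms by (intro span_minimal) auto
next
  show "W \<subseteq> span (U \<union> {w\<in>W. \<forall>u\<in>U. orthogonal u w})"
  proof
    fix x assume "x \<in> W"
    obtain y z where y: "y \<in> span U" and z: "\<And>u. u \<in> span U \<Longrightarrow> orthogonal z u"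
      and "x = y + z"
      using orthogonal_subspace_decomp_exists by metis
    have "y \<in> U" using y assms(1) by (metis span_eq_iff)
    with \<open>x \<in> W\<close> \<open>x = y + z\<close> assms have "z \<in> W"
      by (metis add_diff_cancel_left' subsetD subspace_diff)
    with z have "z \<in> {w\<in>W. \<forall>u\<in>U. orthogonal u w}"
      by (auto simp: orthogonal_commute span_base)
    with \<open>y \<in> U\<close> \<open>x = y + z\<close> show "x \<in> span (U \<union> {w\<in>W. \<forall>u\<in>U. orthogonal u w})"
      by (simp add: span_add span_base)
  qed
qed

section \<open>Simultaneous diagonalisation of commuting symmetric matrices\<close>

lemma symmetric_matrix_inner:
  fixes X :: "real^'n^'n"
  assumes "transpose X = X"
  shows "inner (X *v v) w = inner v (X *v w)"
  by (metis assms dot_lmul_matrix transpose_matrix_vector)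

lemma linear_coeff_zero_if_quadratic_nonpos:
  fixes a b :: real
  assumes "\<And>t. 2*t*a + t^2*b \<le> 0"
  shows "a = 0"
proof (rule ccontr)
  assume "a \<noteq> 0"
  define c where "c = \<bar>b\<bar> + 1"
  have "c > 0" "2*c + b > 0" unfolding c_def by auto
  then have "0 < a^2 * (2*c + b) / c^2" using \<open>a \<noteq> 0\<close> by simp
  also have "\<dots> = 2*(a/c)*a + (a/c)^2*b"
    using \<open>c > 0\<close> by (simp add: field_simps power2_eq_square)
  finally show False using assms[of "a/c"] by simp
qed

lemma symmetric_max_quadratic_form_eigenvector:
  fixes X :: "real^'n^'n"
  assumes sym: "transpose X = X" and W: "subspace W"
    and inv: "\<And>w. w \<in> W \<Longrightarrow> X *v w \<in> W"
    and u: "u \<in> W" "norm u = 1"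
    and max: "\<And>v. v \<in> W \<Longrightarrow> inner v (X *v v) \<le> inner u (X *v u) * inner v v"
  shows "X *v u = inner u (X *v u) *\<^sub>R u"
proof -
  define \<mu> where "\<mu> = inner u (X *v u)"
  define w where "w = X *v u - \<mu> *\<^sub>R u"
  have uu: "inner u u = 1" using u(2) by (simp add: norm_eq_sqrt_inner)
  have wu: "inner w u = 0" unfolding w_def \<mu>_def
    using uu by (simp add: inner_diff_left inner_diff_right inner_commute)
  have "inner w w = inner w (X *v u - \<mu> *\<^sub>R u)" by (simp add: w_def)
  then have wXu: "inner w (X *v u) = inner w w" by (simp add: inner_diff_right wu)
  \<comment> \<open>Along \<open>u + t w\<close> the Rayleigh quotient would grow to first order in \<open>t\<close> unless \<open>w = 0\<close>.\<close>
  have "2*t*inner w w + t^2*(inner w (X *v w) - \<mu> * inner w w) \<le> 0" for t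
  proof -
    define v where "v = u + t *\<^sub>R w"
    have "v \<in> W" unfolding v_def w_def using u W inv
      by (simp add: subspace_add subspace_diff subspace_scale)
    then have "inner v (X *v v) \<le> \<mu> * inner v v" using max unfolding \<mu>_def by blast
    moreover have "inner v v = 1 + t^2 * inner w w" unfolding v_def
      using uu wu by (simp add: inner_add_left inner_add_right inner_commute power2_eq_square)
    moreover have "inner v (X *v v) = \<mu> + 2*t*inner w w + t^2 * inner w (X *v w)"
      using symmetric_matrix_inner[OF sym, of w u] wXu unfolding v_def \<mu>_def
      by (simp add: matrix_vector_right_distrib matrix_vector_mult_scaleR
          inner_add_left inner_add_right inner_commute power2_eq_square algebra_simps)
    ultimately show ?thesis by (simp add: algebra_simps)
  qed
  then have "inner w w = 0" by (rule linear_coeff_zero_if_quadratic_nonpos)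
  then show ?thesis unfolding w_def \<mu>_def by simp
qed

lemma symmetric_invariant_subspace_eigenvector:
  fixes X :: "real^'n^'n"
  assumes sym: "transpose X = X" and W: "subspace W"
    and inv: "\<And>w. w \<in> W \<Longrightarrow> X *v w \<in> W" and "W \<noteq> {0}"
  obtains u where "u \<in> W" "norm u = 1" "X *v u = inner u (X *v u) *\<^sub>R u"
proof -
  define f where "f v = inner v (X *v v)" for v
  define K where "K = W \<inter> sphere 0 1"
  have normalize: "v /\<^sub>R norm v \<in> K" if "v \<in> W" "v \<noteq> 0" for v
    using that W unfolding K_def by (simp add: subspace_scale)
  have "compact K" unfolding K_def by (simp add: W closed_Int_compact closed_subspace)
  moreover have "K \<noteq> {}"
    using \<open>W \<noteq> {0}\<close> W normalize subspace_0 by blast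
  moreover have "continuous_on K f" unfolding f_def
    by (intro continuous_intros linear_continuous_on matrix_vector_mul_bounded_linear)
  ultimately obtain u where u: "u \<in> K" and umax: "\<And>v. v \<in> K \<Longrightarrow> f v \<le> f u"
    using continuous_attains_sup by metis
  have "f v \<le> f u * inner v v" if "v \<in> W" for v
  proof (cases "v = 0")
    case False
    have "f v / (norm v)^2 = f (v /\<^sub>R norm v)"
      unfolding f_def by (simp add: matrix_vector_mult_scaleR power2_eq_square field_simps)
    also have "\<dots> \<le> f u" using umax normalize[OF that False] .
    finally show ?thesis using False by (simp add: divide_le_eq power2_norm_eq_inner mult.commute)
  qed (simp add: f_def)
  then show ?thesis
    using symmetric_max_quadratic_form_eigenvector[OF sym W inv] u that
    unfolding K_def f_def by auto
qed

definition orthonormal_eigenbasis ::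
    "(real^'n^'n) set \<Rightarrow> (real^'n) set \<Rightarrow> (real^'n) set \<Rightarrow> bool" where
  "orthonormal_eigenbasis A W B \<longleftrightarrow>
     orthonormal B \<and> span B = W \<and> (\<forall>X\<in>A. \<forall>u\<in>B. \<exists>c. X *v u = c *\<^sub>R u)"

lemma orthonormal_eigenbasis_Un:
  assumes "orthonormal_eigenbasis A U B" "orthonormal_eigenbasis A V C"
    and orth: "\<And>u v. u \<in> U \<Longrightarrow> v \<in> V \<Longrightarrow> orthogonal u v"
  shows "orthonormal_eigenbasis A (span (U \<union> V)) (B \<union> C)"
proof -
  have U: "span B = U" and V: "span C = V"
    using assms(1,2) unfolding orthonormal_eigenbasis_def by auto
  have "orthogonal b c" if "b \<in> B" "c \<in> C" for b c
    using orth span_base[OF that(1)] span_base[OF that(2)] unfolding U V by blast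
  moreover have "pairwise orthogonal B" "pairwise orthogonal C"
    using assms(1,2) unfolding orthonormal_eigenbasis_def orthonormal_def by auto
  ultimately have "pairwise orthogonal (B \<union> C)"
    unfolding pairwise_def by (metis Un_iff orthogonal_commute)
  moreover have "span (B \<union> C) = span (U \<union> V)"
    unfolding U[symmetric] V[symmetric]
  proof (rule subset_antisym)
    show "span (B \<union> C) \<subseteq> span (span B \<union> span C)"
      by (intro span_mono Un_mono span_superset)
    show "span (span B \<union> span C) \<subseteq> span (B \<union> C)"
      by (intro span_minimal Un_least span_mono) auto
  qed
  ultimately show ?thesis
    using assms(1,2) unfolding orthonormal_eigenbasis_def orthonormal_def by auto
qed

lemma commuting_matrix_preserves_eigenspace:
  fixes X Y :: "real^'n^'n"
  assumes "X ** Y = Y ** X" and "X *v w = \<mu> *\<^sub>R w"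
  shows "X *v (Y *v w) = \<mu> *\<^sub>R (Y *v w)"
proof -
  have "X *v (Y *v w) = Y *v (X *v w)" by (simp add: matrix_vector_mul_assoc assms(1))
  then show ?thesis by (simp add: assms(2) matrix_vector_mult_scaleR)
qed

lemma symmetric_matrix_preserves_orthogonal_complement:
  fixes Y :: "real^'n^'n"
  assumes "transpose Y = Y" and "\<And>v. v \<in> U \<Longrightarrow> Y *v v \<in> U"
    and "\<And>v. v \<in> U \<Longrightarrow> orthogonal v w" and "v \<in> U"
  shows "orthogonal v (Y *v w)"
  using assms(2-4) symmetric_matrix_inner[OF assms(1), of v w]
  unfolding orthogonal_def by simp

lemma orthonormal_eigenbasis_exists:
  fixes A :: "(real^'n^'n) set"
  assumes sym: "\<And>X. X \<in> A \<Longrightarrow> transpose X = X"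
    and comm: "\<And>X Y. X \<in> A \<Longrightarrow> Y \<in> A \<Longrightarrow> X ** Y = Y ** X"
    and "subspace W" and "\<And>X w. X \<in> A \<Longrightarrow> w \<in> W \<Longrightarrow> X *v w \<in> W"
  obtains B where "orthonormal_eigenbasis A W B"
  using assms(3,4)
proof (induction "dim W" arbitrary: W thesis rule: less_induct)
  case less
  note W = \<open>subspace W\<close> and inv = \<open>\<And>X w. X \<in> A \<Longrightarrow> w \<in> W \<Longrightarrow> X *v w \<in> W\<close>
  show ?case
  proof (cases "\<forall>X\<in>A. \<exists>c. \<forall>w\<in>W. X *v w = c *\<^sub>R w")
    case True
    obtain B where "B \<subseteq> W" "orthonormal B" "span B = W"
      using orthonormal_basis_subspace[OF W] unfolding orthonormal_def by metis
    with True have "orthonormal_eigenbasis A W B"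
      unfolding orthonormal_eigenbasis_def by blast
    then show ?thesis by (rule less.prems)
  next
    case False
    then obtain X where X: "X \<in> A" and not_scalar: "\<And>c. \<exists>w\<in>W. X *v w \<noteq> c *\<^sub>R w"
      by blast
    then have "W \<noteq> {0}" using not_scalar[of 0] by auto
    then obtain u where u: "u \<in> W" "norm u = 1" "X *v u = inner u (X *v u) *\<^sub>R u"
      using symmetric_invariant_subspace_eigenvector[OF sym[OF X] W inv[OF X]] by metis
    define U where "U = {w\<in>W. X *v w = inner u (X *v u) *\<^sub>R w}"
    define V where "V = {w\<in>W. \<forall>v\<in>U. orthogonal v w}"
    have "subspace U" unfolding U_def using W
      by (auto simp: subspace_def matrix_vector_right_distrib matrix_vector_mult_scaleR
          scaleR_add_right)
    have "subspace V" unfolding V_def using W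
      by (auto simp: subspace_def orthogonal_clauses)
    have "U \<subseteq> W" "V \<subseteq> W" unfolding U_def V_def by auto
    have inv_U: "Y *v w \<in> U" if "Y \<in> A" "w \<in> U" for Y w
      using that inv[OF that(1)] commuting_matrix_preserves_eigenspace[OF comm[OF X that(1)]]
      unfolding U_def by simp
    have inv_V: "Y *v w \<in> V" if "Y \<in> A" "w \<in> V" for Y w
      using that inv[OF that(1)]
        symmetric_matrix_preserves_orthogonal_complement[OF sym[OF that(1)] inv_U[OF that(1)]]
      unfolding V_def by simp
    have "U \<noteq> W" using not_scalar[of "inner u (X *v u)"] unfolding U_def by auto
    then have "dim U < dim W"
      using \<open>U \<subseteq> W\<close> \<open>subspace U\<close> W by (metis dim_psubset psubsetI span_eq_iff)
    then obtain B where B: "orthonormal_eigenbasis A U B"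
      using less.hyps \<open>subspace U\<close> inv_U by blast
    have "u \<in> U" "u \<noteq> 0" using u unfolding U_def by auto
    then have "u \<notin> V" unfolding V_def using orthogonal_self by blast
    then have "dim V < dim W"
      using u(1) \<open>V \<subseteq> W\<close> \<open>subspace V\<close> W by (metis dim_psubset psubsetI span_eq_iff)
    then obtain C where C: "orthonormal_eigenbasis A V C"
      using less.hyps \<open>subspace V\<close> inv_V by blast
    have "span (U \<union> V) = W"
      unfolding V_def using span_Un_orthogonal_complement \<open>subspace U\<close> W \<open>U \<subseteq> W\<close> .
    then have "orthonormal_eigenbasis A W (B \<union> C)"
      using orthonormal_eigenbasis_Un[OF B C] unfolding V_def by auto
    then show ?thesis by (rule less.prems)
  qed
qed

section \<open>The matrix exponential in an eigenbasis\<close>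

definition outer_prod :: "real^'n \<Rightarrow> real^'n^'n" where
  "outer_prod u = (\<chi> i j. u$i * u$j)"

lemma outer_prod_mult_vector: "outer_prod u *v x = inner u x *\<^sub>R u"
proof -
  have "(\<Sum>j\<in>UNIV. u$i * u$j * x$j) = u$i * (\<Sum>j\<in>UNIV. u$j * x$j)" for i
    by (simp add: sum_distrib_left mult.assoc)
  then show ?thesis
    by (simp add: vec_eq_iff outer_prod_def matrix_vector_mult_def inner_vec_def mult.commute)
qed

lemma matrix_vector_mult_sum_left: "(\<Sum>u\<in>S. f u) *v (x::real^'n) = (\<Sum>u\<in>S. f u *v x)"
  by (induct S rule: infinite_finite_induct) (auto simp: matrix_vector_mult_add_rdistrib)

lemma matpow_eigenvector: "X *v u = l *\<^sub>R u \<Longrightarrow> matpow X k *v u = (l ^ k) *\<^sub>R u"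
  by (induct k) (simp_all add: matrix_vector_mul_assoc[symmetric] matrix_vector_mult_scaleR)

lemma matpow_eigenbasis:
  assumes B: "orthonormal B" "span B = UNIV" and eig: "\<And>u. u \<in> B \<Longrightarrow> X *v u = lam u *\<^sub>R u"
  shows "matpow X k = (\<Sum>u\<in>B. (lam u ^ k) *\<^sub>R outer_prod u)"
  unfolding matrix_eq
proof
  fix x
  have "matpow X k *v x = matpow X k *v (\<Sum>u\<in>B. inner u x *\<^sub>R u)"
    using orthonormal_basis_expansion[OF B] by metis
  also have "\<dots> = (\<Sum>u\<in>B. inner u x *\<^sub>R (matpow X k *v u))"
    by (simp add: linear_sum[OF matrix_vector_mul_linear] matrix_vector_mult_scaleR)
  also have "\<dots> = (\<Sum>u\<in>B. ((lam u ^ k) *\<^sub>R outer_prod u) *v x)"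
    by (rule sum.cong) (simp_all add: matpow_eigenvector[OF eig] scaleR_matrix_vector_assoc[symmetric]
        outer_prod_mult_vector)
  finally show "matpow X k *v x = (\<Sum>u\<in>B. (lam u ^ k) *\<^sub>R outer_prod u) *v x"
    by (simp add: matrix_vector_mult_sum_left)
qed

lemma mexp_eigenbasis:
  assumes B: "orthonormal B" "span B = UNIV" and eig: "\<And>u. u \<in> B \<Longrightarrow> X *v u = lam u *\<^sub>R u"
  shows "mexp X = (\<Sum>u\<in>B. exp (lam u) *\<^sub>R outer_prod u)"
proof -
  have "(\<lambda>k. \<Sum>u\<in>B. (lam u ^ k /\<^sub>R fact k) *\<^sub>R outer_prod u) sums
          (\<Sum>u\<in>B. exp (lam u) *\<^sub>R outer_prod u)"
    by (intro sums_sum sums_scaleR_left exp_converges)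
  moreover have "(\<lambda>k. \<Sum>u\<in>B. (lam u ^ k /\<^sub>R fact k) *\<^sub>R outer_prod u) =
                 (\<lambda>k. (1 / fact k) *\<^sub>R matpow X k)"
    by (simp add: matpow_eigenbasis[OF assms] scaleR_sum_right divide_inverse_commute)
  ultimately show ?thesis unfolding mexp_def by (simp add: sums_iff)
qed

lemma inner_mexp_eigenbasis:
  assumes B: "orthonormal B" "span B = UNIV" and eig: "\<And>u. u \<in> B \<Longrightarrow> X *v u = lam u *\<^sub>R u"
    and "v \<in> B"
  shows "inner v (mexp X *v x) = exp (lam v) * inner v x"
proof -
  have "mexp X *v x = (\<Sum>u\<in>B. (exp (lam u) * inner u x) *\<^sub>R u)"
    by (simp add: mexp_eigenbasis[OF B eig] matrix_vector_mult_sum_left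
        scaleR_matrix_vector_assoc[symmetric] outer_prod_mult_vector)
  then show ?thesis using orthonormal_inner_sum[OF B(1) \<open>v \<in> B\<close>] by simp
qed

section \<open>Real algebraic sets\<close>

lemma poly_fun_sum:
  "finite S \<Longrightarrow> (\<And>i. i \<in> S \<Longrightarrow> f i \<in> poly_fun) \<Longrightarrow> (\<lambda>x. \<Sum>i\<in>S. f i x) \<in> poly_fun"
  by (induct S rule: finite_induct) (auto intro: poly_fun.const[of 0] poly_fun.add)

lemma poly_fun_inner: "(\<lambda>x. inner u x) \<in> poly_fun"
  unfolding inner_vec_def
  by (rule poly_fun_sum) (auto intro: poly_fun.mult poly_fun.const poly_fun.coord)

lemma poly_fun_continuous: "p \<in> poly_fun \<Longrightarrow> continuous_on UNIV p"
  by (induct p rule: poly_fun.induct) (auto intro!: continuous_intros)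

lemma real_algebraic_set_empty: "real_algebraic_set {}"
  unfolding real_algebraic_set_def
  by (rule exI[of _ "{\<lambda>x. 1}"]) (auto intro: poly_fun.const)

lemma real_algebraic_set_Un:
  assumes "real_algebraic_set S" "real_algebraic_set T"
  shows "real_algebraic_set (S \<union> T)"
proof -
  obtain P where P: "finite P" "P \<subseteq> poly_fun" "S = {x. \<forall>p\<in>P. p x = 0}"
    using assms(1) unfolding real_algebraic_set_def by blast
  obtain Q where Q: "finite Q" "Q \<subseteq> poly_fun" "T = {x. \<forall>q\<in>Q. q x = 0}"
    using assms(2) unfolding real_algebraic_set_def by blast
  define R where "R = (\<lambda>(p, q) x. p x * q x) ` (P \<times> Q)"
  have "finite R" "R \<subseteq> poly_fun"
    unfolding R_def using P Q by (auto intro: poly_fun.mult)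
  moreover have "S \<union> T = {x. \<forall>r\<in>R. r x = 0}"
    unfolding R_def P(3) Q(3) by auto
  ultimately show ?thesis unfolding real_algebraic_set_def by blast
qed

lemma real_algebraic_set_Union:
  "finite F \<Longrightarrow> (\<And>S. S \<in> F \<Longrightarrow> real_algebraic_set S) \<Longrightarrow> real_algebraic_set (\<Union>F)"
  by (induct F rule: finite_induct) (auto simp: real_algebraic_set_empty real_algebraic_set_Un)

lemma real_algebraic_set_orthogonal_complement:
  "finite U \<Longrightarrow> real_algebraic_set {x. \<forall>u\<in>U. inner u x = 0}"
  unfolding real_algebraic_set_def
  by (rule exI[of _ "(\<lambda>u x. inner u x) ` U"]) (auto simp: poly_fun_inner)

lemma real_algebraic_set_closed:
  assumes "real_algebraic_set S"
  shows "closed S"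
proof -
  obtain P where P: "P \<subseteq> poly_fun" "S = (\<Inter>p\<in>P. {x. p x = 0})"
    using assms unfolding real_algebraic_set_def by blast
  have "closed {x. p x = 0}" if "p \<in> P" for p
    using closed_Collect_eq[OF poly_fun_continuous continuous_on_const] that P(1) by blast
  then show ?thesis using P(2) by auto
qed

section \<open>Null sets of families diagonal in an orthonormal basis\<close>

lemma zero_in_closure_image_dominated:
  fixes f g :: "'i \<Rightarrow> 'a::real_normed_vector"
  assumes "0 \<in> closure (g ` I)" and dom: "\<And>i. i \<in> I \<Longrightarrow> norm (f i) \<le> K * norm (g i)"
  shows "0 \<in> closure (f ` I)"
  unfolding closure_approachable dist_norm
proof (intro allI impI)
  fix e :: real assume "e > 0"
  then have "e / (\<bar>K\<bar> + 1) > 0" by simp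
  with assms(1) obtain y where "y \<in> g ` I" "norm (y - 0) < e / (\<bar>K\<bar> + 1)"
    unfolding closure_approachable dist_norm by blast
  then obtain i where i: "i \<in> I" "norm (g i) < e / (\<bar>K\<bar> + 1)" by auto
  have "norm (f i) \<le> \<bar>K\<bar> * norm (g i)"
    using dom[OF i(1)] by (meson abs_ge_self mult_right_mono norm_ge_zero order_trans)
  also have "\<dots> \<le> (\<bar>K\<bar> + 1) * norm (g i)" by (simp add: distrib_right)
  also have "\<dots> < (\<bar>K\<bar> + 1) * (e / (\<bar>K\<bar> + 1))"
    using i(2) by (intro mult_strict_left_mono) auto
  also have "\<dots> = e" by simp
  finally show "\<exists>y\<in>f ` I. norm (y - 0) < e" using i(1) by auto
qed

lemma diagonal_norm_le_support_ratio:
  fixes f :: "'a::euclidean_space \<Rightarrow> 'a"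
  assumes B: "orthonormal B" "span B = UNIV"
    and diag: "\<And>u x. u \<in> B \<Longrightarrow> inner u (f x) = c u * inner u x"
    and supp: "\<And>u. u \<in> B \<Longrightarrow> inner u y = 0 \<Longrightarrow> inner u x = 0"
  shows "norm (f x) \<le> (\<Sum>u\<in>B. \<bar>inner u x\<bar> / \<bar>inner u y\<bar>) * norm (f y)"
  \<comment> \<open>Terms with \<open>inner u y = 0\<close> are \<open>0\<close> by the convention \<open>a / 0 = 0\<close>, harmlessly so by \<open>supp\<close>.\<close>
proof -
  have unit: "norm u = 1" if "u \<in> B" for u
    using B(1) that unfolding orthonormal_def by blast
  have "norm (f x) \<le> (\<Sum>u\<in>B. norm (inner u (f x) *\<^sub>R u))"
    by (subst orthonormal_basis_expansion[OF B]) (rule norm_sum)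
  also have "\<dots> = (\<Sum>u\<in>B. \<bar>inner u x\<bar> / \<bar>inner u y\<bar> * \<bar>inner u (f y)\<bar>)"
  proof (rule sum.cong)
    fix u assume "u \<in> B"
    show "norm (inner u (f x) *\<^sub>R u) = \<bar>inner u x\<bar> / \<bar>inner u y\<bar> * \<bar>inner u (f y)\<bar>"
    proof (cases "inner u y = 0")
      case True
      then show ?thesis using supp diag \<open>u \<in> B\<close> by simp
    next
      case False
      then show ?thesis using diag unit \<open>u \<in> B\<close> by (simp add: abs_mult)
    qed
  qed simp
  also have "\<dots> \<le> (\<Sum>u\<in>B. \<bar>inner u x\<bar> / \<bar>inner u y\<bar> * norm (f y))"
  proof (intro sum_mono mult_left_mono)
    fix u assume "u \<in> B"
    then show "\<bar>inner u (f y)\<bar> \<le> norm (f y)"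
      using Cauchy_Schwarz_ineq2[of u "f y"] unit by simp
  qed simp
  finally show ?thesis by (simp add: sum_distrib_right)
qed

lemma real_algebraic_set_diagonal_null_set:
  fixes g :: "'i \<Rightarrow> real^'n \<Rightarrow> real^'n"
  assumes B: "orthonormal B" "span B = UNIV"
    and diag: "\<And>i u x. i \<in> I \<Longrightarrow> u \<in> B \<Longrightarrow> inner u (g i x) = c i u * inner u x"
  shows "real_algebraic_set {x. 0 \<in> closure ((\<lambda>i. g i x) ` I)}"
proof -
  define Z where "Z = {x. 0 \<in> closure ((\<lambda>i. g i x) ` I)}"
  define zeros where "zeros y = {u\<in>B. inner u y = 0}" for y
  have Z_eq: "Z = (\<Union>T\<in>zeros ` Z. {x. \<forall>u\<in>T. inner u x = 0})"
  proof (intro equalityI subsetI)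
    fix x assume "x \<in> (\<Union>T\<in>zeros ` Z. {x. \<forall>u\<in>T. inner u x = 0})"
    then obtain y where "y \<in> Z" and supp: "\<And>u. u \<in> B \<Longrightarrow> inner u y = 0 \<Longrightarrow> inner u x = 0"
      unfolding zeros_def by auto
    have "0 \<in> closure ((\<lambda>i. g i x) ` I)"
    proof (rule zero_in_closure_image_dominated)
      show "0 \<in> closure ((\<lambda>i. g i y) ` I)" using \<open>y \<in> Z\<close> unfolding Z_def by simp
      show "norm (g i x) \<le> (\<Sum>u\<in>B. \<bar>inner u x\<bar> / \<bar>inner u y\<bar>) * norm (g i y)" if "i \<in> I" for i
        using diagonal_norm_le_support_ratio[OF B diag[OF that] supp] .
    qed
    then show "x \<in> Z" unfolding Z_def by simp
  qed (auto simp: zeros_def)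
  have "finite (zeros ` Z)"
    by (rule finite_subset[of _ "Pow B"]) (auto simp: zeros_def orthonormal_finite[OF B(1)])
  moreover have "finite T" if "T \<in> zeros ` Z" for T
    using that orthonormal_finite[OF B(1)] unfolding zeros_def by auto
  ultimately have "real_algebraic_set (\<Union>T\<in>zeros ` Z. {x. \<forall>u\<in>T. inner u x = 0})"
    by (intro real_algebraic_set_Union) (auto intro: real_algebraic_set_orthogonal_complement)
  then show ?thesis using Z_eq unfolding Z_def by simp
qed

theorem mainTheorem5:
  fixes \<aa> :: "(real^'n^'n) set"
  assumes "subspace \<aa>"
    and "\<And>X. X \<in> \<aa> \<Longrightarrow> transpose X = X"
    and "\<And>X Y. X \<in> \<aa> \<Longrightarrow> Y \<in> \<aa> \<Longrightarrow> X ** Y = Y ** X"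
  shows "real_algebraic_set {x :: real^'n. 0 \<in> closure ((\<lambda>X. mexp X *v x) ` \<aa>)}
       \<and> closed {x :: real^'n. 0 \<in> closure ((\<lambda>X. mexp X *v x) ` \<aa>)}"
proof -
  obtain B where "orthonormal_eigenbasis \<aa> UNIV B"
    using orthonormal_eigenbasis_exists[OF assms(2,3) subspace_UNIV] by blast
  then have B: "orthonormal B" "span B = UNIV"
    and "\<forall>X\<in>\<aa>. \<forall>u\<in>B. \<exists>c. X *v u = c *\<^sub>R u"
    unfolding orthonormal_eigenbasis_def by auto
  then obtain lam where lam: "\<And>X u. X \<in> \<aa> \<Longrightarrow> u \<in> B \<Longrightarrow> X *v u = lam X u *\<^sub>R u"
    by metis
  have "inner u (mexp X *v x) = exp (lam X u) * inner u x" if "X \<in> \<aa>" "u \<in> B" for X u x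
    using inner_mexp_eigenbasis[OF B lam[OF that(1)] that(2)] .
  then have "real_algebraic_set {x. 0 \<in> closure ((\<lambda>X. mexp X *v x) ` \<aa>)}"
    by (rule real_algebraic_set_diagonal_null_set[OF B])
  then show ?thesis using real_algebraic_set_closed by blast
qed

end
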